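(* Let $\mathfrak{g}$ be any Lie algebra whose bracket, in a basis $\{X_0,\dots,X_7\}$, is given by the family $F_8$ below with $a_1=0$ (i.e. $\mathfrak{g}\in Fil_8(1)$). Then $\mathfrak{g}$ is not rigid in $\mathcal{F}il_8$, not rigid in $\mathcal{N}il_8$, and not rigid in $\mathcal{L}ie_8$; i.e. its $GL(8,\mathbb{K})$-orbit is not Zariski open in any of these three varieties.
   Context: $\mathbb{K}$ is algebraically closed of characteristic $0$. $\mathcal{L}ie_8$ is the affine algebraic variety of all Lie brackets on $\mathbb{K}^8$ (tuples of structure constants $C_{ij}^k$ satisfying skew-symmetry and the Jacobi identity), with $GL(8,\mathbb{K})$ acting by change of basis; $\mathcal{N}il_8\subset\mathcal{L}ie_8$ is the subvariety of nilpotent brackets and $\mathcal{F}il_8$ the (Zariski open in $\mathcal{N}il_8$) subset of filiform brackets (nilpotent of nilindex $7$). A Lie bracket is rigid in a $GL$-stable subset $S$ if its orbit is Zariski open in $S$. The family $F_8$ (parameters $a_1,a_2,a_4,a_5,a_6,a_7,a_8\in\mathbb{K}$ with $a_1(5a_4+2a_2)=0$): $\mu(X_0,X_i)=X_{i+1}$ ($1\le i\le 6$), $\mu(X_2,X_5)=a_1X_7$, $\mu(X_1,X_5)=a_1X_6+a_2X_7$, $\mu(X_3,X_4)=-a_1X_7$, $\mu(X_2,X_4)=a_4X_7$, $\mu(X_1,X_4)=a_1X_5+(a_2+a_4)X_6+a_5X_7$, $\mu(X_2,X_3)=a_4X_6+a_6X_7$, $\mu(X_1,X_3)=a_1X_4+(a_2+2a_4)X_5+(a_5+a_6)X_6+a_7X_7$,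 $\mu(X_1,X_2)=a_1X_3+(a_2+2a_4)X_4+(a_5+a_6)X_5+a_7X_6+a_8X_7$, all other brackets $\mu(X_i,X_j)$, $i<j$, being zero. Every 8-dimensional filiform Lie algebra is isomorphic to a member of $F_8$. $Fil_8(1)$ denotes the members with $a_1=0$, $Fil_8(2)$ those with $5a_4+2a_2=0$, and $\mathcal{F}il_8(k)$ the union of $GL(8,\mathbb{K})$-orbits of $Fil_8(k)$. *)

theory Defs
  imports "HOL-Computational_Algebra.Polynomial"
begin

definition alg_closed :: "'a::field itself \<Rightarrow> bool" where
  "alg_closed _ \<longleftrightarrow> (\<forall>p::'a poly. degree p \<ge> 1 \<longrightarrow> (\<exists>x. poly p x = 0))"

text \<open>Structure constants: C i j k = C_{ij}^k, i.e. mu(X_i,X_j) = sum_k C_{ij}^k X_k.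
  Points of the ambient affine space K^(n^3) are those vanishing outside indices < n.\<close>
type_synonym 'a sc = "nat \<Rightarrow> nat \<Rightarrow> nat \<Rightarrow> 'a"

definition in_ambient :: "nat \<Rightarrow> 'a::zero sc \<Rightarrow> bool" where
  "in_ambient n C \<longleftrightarrow> (\<forall>i j k. (n \<le> i \<or> n \<le> j \<or> n \<le> k) \<longrightarrow> C i j k = 0)"

definition is_lie :: "nat \<Rightarrow> 'a::comm_ring_1 sc \<Rightarrow> bool" where
  "is_lie n C \<longleftrightarrow> in_ambient n C
     \<and> (\<forall>i j k. C i j k = - C j i k) \<and> (\<forall>i k. C i i k = 0)
     \<and> (\<forall>i<n. \<forall>j<n. \<forall>l<n. \<forall>m<n.
          (\<Sum>s<n. C i j s * C s l m + C j l s * C s i m + C l i s * C s j m) = 0)"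

definition vecs :: "nat \<Rightarrow> (nat \<Rightarrow> 'a::zero) set" where
  "vecs n = {v. \<forall>i\<ge>n. v i = 0}"

definition br :: "nat \<Rightarrow> 'a::comm_ring_1 sc \<Rightarrow> (nat \<Rightarrow> 'a) \<Rightarrow> (nat \<Rightarrow> 'a) \<Rightarrow> nat \<Rightarrow> 'a" where
  "br n C x y = (\<lambda>k. \<Sum>i<n. \<Sum>j<n. x i * y j * C i j k)"

definition lspan :: "(nat \<Rightarrow> 'a::comm_ring_1) set \<Rightarrow> (nat \<Rightarrow> 'a) set" where
  "lspan S = {v. \<exists>(m::nat) c u. (\<forall>i<m. u i \<in> S) \<and> v = (\<lambda>k. \<Sum>i<m. c i * u i k)}"

text \<open>Lower central series: lcs n C 0 = g = C^1 g, lcs n C (Suc t) = [g, lcs n C t].\<close>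
fun lcs :: "nat \<Rightarrow> 'a::comm_ring_1 sc \<Rightarrow> nat \<Rightarrow> (nat \<Rightarrow> 'a) set" where
  "lcs n C 0 = vecs n"
| "lcs n C (Suc t) = lspan {br n C x y | x y. x \<in> vecs n \<and> y \<in> lcs n C t}"

definition nilpotent_br :: "nat \<Rightarrow> 'a::comm_ring_1 sc \<Rightarrow> bool" where
  "nilpotent_br n C \<longleftrightarrow> (\<exists>t. lcs n C t = {\<lambda>_. 0})"

text \<open>Filiform: nilpotent of nilindex n-1, i.e. C^{n-1} g \<noteq> 0 and C^n g = 0.\<close>
definition filiform_br :: "nat \<Rightarrow> 'a::comm_ring_1 sc \<Rightarrow> bool" where
  "filiform_br n C \<longleftrightarrow> lcs n C (n - 1) = {\<lambda>_. 0} \<and> lcs n C (n - 2) \<noteq> {\<lambda>_. 0}"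

definition Lie_var :: "nat \<Rightarrow> 'a::comm_ring_1 sc set" where
  "Lie_var n = {C. is_lie n C}"
definition Nil_var :: "nat \<Rightarrow> 'a::comm_ring_1 sc set" where
  "Nil_var n = {C. is_lie n C \<and> nilpotent_br n C}"
definition Fil_var :: "nat \<Rightarrow> 'a::comm_ring_1 sc set" where
  "Fil_var n = {C. is_lie n C \<and> filiform_br n C}"

text \<open>GL(n)-orbit: C' is obtained from C by a change of basis g (invertible n x n matrix),
  i.e. the linear map f(X_i) = sum_a g a i X_a satisfies f(mu(X_i,X_j)) = mu'(f X_i, f X_j).\<close>
definition invertible_mat :: "nat \<Rightarrow> (nat \<Rightarrow> nat \<Rightarrow> 'a::comm_ring_1) \<Rightarrow> bool" where
  "invertible_mat n g \<longleftrightarrow> (\<exists>h. \<forall>i<n. \<forall>j<n.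
      (\<Sum>l<n. g i l * h l j) = (if i = j then 1 else 0) \<and>
      (\<Sum>l<n. h i l * g l j) = (if i = j then 1 else 0))"

definition gl_orbit :: "nat \<Rightarrow> 'a::comm_ring_1 sc \<Rightarrow> 'a sc set" where
  "gl_orbit n C = {C'. in_ambient n C' \<and> (\<exists>g. invertible_mat n g \<and>
      (\<forall>i<n. \<forall>j<n. \<forall>k<n.
         (\<Sum>c<n. C i j c * g k c) = (\<Sum>a<n. \<Sum>b<n. g a i * g b j * C' a b k)))}"

inductive_set polyfun :: "('a::comm_ring_1 sc \<Rightarrow> 'a) set" where
  pf_const: "(\<lambda>_. c) \<in> polyfun"
| pf_coord: "(\<lambda>C. C i j k) \<in> polyfun"
| pf_add: "p \<in> polyfun \<Longrightarrow> q \<in> polyfun \<Longrightarrow> (\<lambda>C. p C + q C) \<in> polyfun"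
| pf_mult: "p \<in> polyfun \<Longrightarrow> q \<in> polyfun \<Longrightarrow> (\<lambda>C. p C * q C) \<in> polyfun"

definition zariski_open_in :: "'a::comm_ring_1 sc set \<Rightarrow> 'a sc set \<Rightarrow> bool" where
  "zariski_open_in S U \<longleftrightarrow> U \<subseteq> S \<and>
     (\<exists>P. P \<subseteq> polyfun \<and> U = S \<inter> {C. \<exists>p\<in>P. p C \<noteq> 0})"

definition rigid_in :: "nat \<Rightarrow> 'a::comm_ring_1 sc set \<Rightarrow> 'a sc \<Rightarrow> bool" where
  "rigid_in n S C \<longleftrightarrow> zariski_open_in S (gl_orbit n C)"

definition F8_up :: "'a::comm_ring_1 \<Rightarrow> 'a \<Rightarrow> 'a \<Rightarrow> 'a \<Rightarrow> 'a \<Rightarrow> 'a \<Rightarrow> 'a \<Rightarrow> nat \<Rightarrow> nat \<Rightarrow> nat \<Rightarrow> 'a" where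
  "F8_up a1 a2 a4 a5 a6 a7 a8 i j k =
    (if i = 0 \<and> 1 \<le> j \<and> j \<le> 6 \<and> k = j + 1 then 1
     else if (i, j, k) = (2, 5, 7) then a1
     else if (i, j, k) = (1, 5, 6) then a1
     else if (i, j, k) = (1, 5, 7) then a2
     else if (i, j, k) = (3, 4, 7) then - a1
     else if (i, j, k) = (2, 4, 7) then a4
     else if (i, j, k) = (1, 4, 5) then a1
     else if (i, j, k) = (1, 4, 6) then a2 + a4
     else if (i, j, k) = (1, 4, 7) then a5
     else if (i, j, k) = (2, 3, 6) then a4
     else if (i, j, k) = (2, 3, 7) then a6
     else if (i, j, k) = (1, 3, 4) then a1
     else if (i, j, k) = (1, 3, 5) then a2 + 2 * a4
     else if (i, j, k) = (1, 3, 6) then a5 + a6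
     else if (i, j, k) = (1, 3, 7) then a7
     else if (i, j, k) = (1, 2, 3) then a1
     else if (i, j, k) = (1, 2, 4) then a2 + 2 * a4
     else if (i, j, k) = (1, 2, 5) then a5 + a6
     else if (i, j, k) = (1, 2, 6) then a7
     else if (i, j, k) = (1, 2, 7) then a8
     else 0)"

definition F8 :: "'a::comm_ring_1 \<Rightarrow> 'a \<Rightarrow> 'a \<Rightarrow> 'a \<Rightarrow> 'a \<Rightarrow> 'a \<Rightarrow> 'a \<Rightarrow> 'a sc" where
  "F8 a1 a2 a4 a5 a6 a7 a8 i j k =
    (if i < j then F8_up a1 a2 a4 a5 a6 a7 a8 i j k
     else if j < i then - F8_up a1 a2 a4 a5 a6 a7 a8 j i k
     else 0)"

end

theory Submission
  imports Defs
begin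

text \<open>
  Every member of F8 with a1 = 0 is a filiform Lie algebra, whatever the remaining parameters.
  On this family the point (a2 : a4) is an isomorphism invariant. If an isomorphism F onto the
  member with parameters c2, c4, ... maps x, y to X0, X1, then the iterated brackets
  u_k = ad_x^k [x, y] map to X_(k+2), the X0-coordinate of y vanishes, and
  [y, u_3] = a2 s X7, [u_0, u_2] = a4 s X7 with one common factor s, while F maps these two
  brackets to [X1, X5] = c2 X7 and [X2, X4] = c4 X7.
  Moving (a2, a4) in a direction off the line through (a2, a4) and 0 thus gives a polynomial
  curve in Fil_8 through the given bracket that leaves its orbit for every t \<noteq> 0.
  A polynomial function not vanishing at the bracket restricts to a polynomial in t that is
  nonzero at 0 but vanishes for all t \<noteq> 0, which is impossible over an infinite field.
\<close>

definition unit_vec :: "nat \<Rightarrow> nat \<Rightarrow> 'a::zero_neq_one" where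
  "unit_vec j = (\<lambda>k. if k = j then 1 else 0)"

lemma br_unit_vec_right:
  "l < n \<Longrightarrow> br n C v (unit_vec l) k = (\<Sum>s<n. v s * C s l k)"
  by (simp add: br_def unit_vec_def if_distrib[of "\<lambda>t. _ * t * _"] sum.delta cong: if_cong)

lemma br_unit_vec:
  assumes "i < n" and "j < n"
  shows "br n C (unit_vec i) (unit_vec j) = C i j"
proof
  fix k
  have "br n C (unit_vec i) (unit_vec j) k = (\<Sum>s<n. unit_vec i s * C s j k)"
    using \<open>j < n\<close> by (rule br_unit_vec_right)
  also have "\<dots> = C i j k"
    using \<open>i < n\<close> by (simp add: unit_vec_def if_distrib[of "\<lambda>t. t * _"] sum.delta cong: if_cong)
  finally show "br n C (unit_vec i) (unit_vec j) k = C i j k" .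
qed

lemma is_lieI_bracket:
  fixes C :: "'a::comm_ring_1 sc"
  assumes "in_ambient n C" and "\<And>i j k. C i j k = - C j i k" and "\<And>i k. C i i k = 0"
    and jacobi: "\<And>x y z k. br n C (br n C x y) z k + br n C (br n C y z) x k + br n C (br n C z x) y k = 0"
  shows "is_lie n C"
proof -
  have "(\<Sum>s<n. C i j s * C s l m + C j l s * C s i m + C l i s * C s j m) = 0"
    if "i < n" "j < n" "l < n" "m < n" for i j l m
    using jacobi[of "unit_vec i" "unit_vec j" "unit_vec l" m] that
    by (simp add: br_unit_vec br_unit_vec_right sum.distrib)
  with assms show ?thesis
    unfolding is_lie_def by blast
qed

lemma br_vecs: "in_ambient n C \<Longrightarrow> br n C x y \<in> vecs n"
  by (simp add: br_def vecs_def in_ambient_def)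

section \<open>A sufficient condition for filiformity\<close>

definition vecs_from :: "nat \<Rightarrow> nat \<Rightarrow> (nat \<Rightarrow> 'a::zero) set" where
  "vecs_from n m = {v \<in> vecs n. \<forall>i<m. v i = 0}"

lemma vecs_fromD: "v \<in> vecs_from n m \<Longrightarrow> i < m \<Longrightarrow> v i = 0"
  by (simp add: vecs_from_def)

lemma vecs_from_vecs: "v \<in> vecs_from n m \<Longrightarrow> v \<in> vecs n"
  by (simp add: vecs_from_def)

lemma zero_in_lspan: "(\<lambda>_. 0) \<in> lspan S"
  unfolding lspan_def by (rule CollectI, rule exI[of _ 0]) simp

lemma lspan_superset: "u \<in> S \<Longrightarrow> u \<in> lspan S"
  unfolding lspan_def by (rule CollectI, rule exI[of _ 1], rule exI[of _ "\<lambda>_. 1"]) auto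

lemma lspan_subset_vecs_from:
  assumes "S \<subseteq> vecs_from n m"
  shows "lspan S \<subseteq> vecs_from n m"
proof
  fix v assume "v \<in> lspan S"
  then obtain l :: nat and c u where "\<forall>i<l. u i \<in> S" and v: "v = (\<lambda>k. \<Sum>i<l. c i * u i k)"
    unfolding lspan_def by blast
  with assms have "\<forall>i<l. u i \<in> vecs_from n m" by blast
  then show "v \<in> vecs_from n m"
    unfolding v vecs_from_def vecs_def by auto
qed

lemma br_in_vecs_from_2:
  assumes "in_ambient n C" and "\<And>i j k. C i j k \<noteq> 0 \<Longrightarrow> 2 \<le> k"
  shows "br n C x y \<in> vecs_from n 2"
proof -
  have "x i * y j * C i j k = 0" if "k < 2" for i j k
    using assms(2)[of i j k] that by fastforce
  then show ?thesis
    using br_vecs[OF assms(1)] by (simp add: vecs_from_def br_def)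
qed

lemma br_in_vecs_from_Suc:
  assumes "in_ambient n C" and "\<And>i j k. C i j k \<noteq> 0 \<Longrightarrow> j < k" and "v \<in> vecs_from n m"
  shows "br n C x v \<in> vecs_from n (Suc m)"
proof -
  have "x i * v j * C i j k = 0" if "k < Suc m" for i j k
    using assms(2)[of i j k] vecs_fromD[OF assms(3), of j] that by fastforce
  then show ?thesis
    using br_vecs[OF assms(1)] by (simp add: vecs_from_def br_def)
qed

lemma lcs_Suc_subset_vecs_from:
  assumes "in_ambient n C" and "\<And>i j k. C i j k \<noteq> 0 \<Longrightarrow> 2 \<le> k \<and> j < k"
  shows "lcs n C (Suc t) \<subseteq> vecs_from n (Suc (Suc t))"
proof (induction t)
  case 0
  show ?case
    using br_in_vecs_from_2[of n C] assms by (auto simp: numeral_2_eq_2 intro!: lspan_subset_vecs_from)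
next
  case (Suc t)
  then show ?case
    using br_in_vecs_from_Suc[of n C] assms
    by (simp only: lcs.simps) (rule lspan_subset_vecs_from, fastforce)
qed

lemma unit_vec_in_lcs:
  assumes "\<And>j. 1 \<le> j \<Longrightarrow> Suc j < n \<Longrightarrow> C 0 j = unit_vec (Suc j)" and "Suc t < n"
  shows "unit_vec (Suc t) \<in> lcs n C t"
  using assms(2)
proof (induction t)
  case 0
  then show ?case by (simp add: vecs_def unit_vec_def)
next
  case (Suc t)
  then have "unit_vec (Suc (Suc t)) = br n C (unit_vec 0) (unit_vec (Suc t))"
    using assms(1) by (simp add: br_unit_vec)
  moreover have "unit_vec 0 \<in> vecs n"
    using Suc.prems by (simp add: vecs_def unit_vec_def)
  moreover have "unit_vec (Suc t) \<in> lcs n C t"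
    using Suc by simp
  ultimately have "unit_vec (Suc (Suc t)) \<in> {br n C x y |x y. x \<in> vecs n \<and> y \<in> lcs n C t}"
    by blast
  then show ?case
    by (simp only: lcs.simps) (rule lspan_superset)
qed

lemma filiform_brI:
  fixes C :: "'a::comm_ring_1 sc"
  assumes "2 \<le> n" and "in_ambient n C" and "\<And>i j k. C i j k \<noteq> 0 \<Longrightarrow> 2 \<le> k \<and> j < k"
    and "\<And>j. 1 \<le> j \<Longrightarrow> Suc j < n \<Longrightarrow> C 0 j = unit_vec (Suc j)"
  shows "filiform_br n C"
proof -
  obtain t where n: "n = Suc (Suc t)"
    using assms(1) by (metis add_2_eq_Suc le_Suc_ex)
  have "lcs n C (n - 1) \<subseteq> vecs_from n n"
    using lcs_Suc_subset_vecs_from[OF assms(2,3), where t = t] n by simp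
  moreover have "vecs_from n n \<subseteq> {\<lambda>_. 0::'a}"
    by (auto simp: vecs_from_def vecs_def) (metis not_less)
  moreover have "(\<lambda>_. 0) \<in> lcs n C (n - 1)"
    using zero_in_lspan n by simp
  ultimately have "lcs n C (n - 1) = {\<lambda>_. 0}"
    by blast
  moreover have "unit_vec (n - 1) \<in> lcs n C (n - 2)"
    using unit_vec_in_lcs[of n C t] assms(4) n by simp
  moreover have "unit_vec (n - 1) \<noteq> (\<lambda>_. 0::'a)"
    by (metis unit_vec_def zero_neq_one)
  ultimately show ?thesis
    unfolding filiform_br_def by auto
qed

section \<open>Polynomial curves and Zariski open sets\<close>

lemma polyfun_along_polynomial_curve:
  assumes "p \<in> polyfun" and curve: "\<And>t i j k. \<Gamma> t i j k = poly (Q i j k) t"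
  shows "\<exists>r. \<forall>t. p (\<Gamma> t) = poly r t"
  using assms(1)
proof induction
  case (pf_const c)
  show ?case by (rule exI[of _ "[:c:]"]) simp
next
  case (pf_coord i j k)
  show ?case by (rule exI[of _ "Q i j k"]) (simp add: curve)
next
  case (pf_add p q)
  then obtain r s where "\<forall>t. p (\<Gamma> t) = poly r t" "\<forall>t. q (\<Gamma> t) = poly s t" by blast
  then show ?case by (intro exI[of _ "r + s"]) simp
next
  case (pf_mult p q)
  then obtain r s where "\<forall>t. p (\<Gamma> t) = poly r t" "\<forall>t. q (\<Gamma> t) = poly s t" by blast
  then show ?case by (intro exI[of _ "r * s"]) simp
qed

lemma not_zariski_open_in_if_curve:
  fixes \<Gamma> :: "'a::{idom,ring_char_0} \<Rightarrow> 'a sc"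
  assumes curve: "\<And>t i j k. \<Gamma> t i j k = poly (Q i j k) t"
    and "\<And>t. \<Gamma> t \<in> S" and "\<Gamma> 0 \<in> U" and "\<And>t. t \<noteq> 0 \<Longrightarrow> \<Gamma> t \<notin> U"
  shows "\<not> zariski_open_in S U"
proof
  assume "zariski_open_in S U"
  then obtain P where "P \<subseteq> polyfun" and U: "U = S \<inter> {C. \<exists>p\<in>P. p C \<noteq> 0}"
    unfolding zariski_open_in_def by blast
  with \<open>\<Gamma> 0 \<in> U\<close> obtain p where p: "p \<in> polyfun" "p \<in> P" "p (\<Gamma> 0) \<noteq> 0"
    by blast
  then obtain r where r: "\<And>t. p (\<Gamma> t) = poly r t"
    using polyfun_along_polynomial_curve[of p \<Gamma> Q] curve by blast
  have "p (\<Gamma> t) = 0" if "t \<noteq> 0" for t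
    using assms(2)[of t] assms(4)[OF that] p(2) unfolding U by blast
  then have "UNIV \<subseteq> insert 0 {t. poly r t = 0}"
    using r by auto
  moreover have "finite {t. poly r t = 0}"
    using p(3) r by (intro poly_roots_finite) auto
  ultimately have "finite (UNIV :: 'a set)"
    by (rule finite_subset[OF _ finite_insert[THEN iffD2]])
  then show False
    using infinite_UNIV_char_0 by blast
qed

lemma gl_orbit_refl:
  fixes C :: "'a::comm_ring_1 sc"
  assumes "in_ambient n C"
  shows "C \<in> gl_orbit n C"
proof -
  let ?one = "\<lambda>a b. if a = b then 1 else 0 :: 'a"
  have left: "(if P then x else 0) * y = (if P then x * y else 0)"
    and right: "y * (if P then x else 0) = (if P then y * x else 0)" for P and x y :: 'a
    by simp_all
  have "invertible_mat n ?one"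
    unfolding invertible_mat_def by (rule exI[of _ ?one]) (simp add: left cong: if_cong)
  moreover have "(\<Sum>c<n. C i j c * ?one k c) = (\<Sum>a<n. \<Sum>b<n. ?one a i * ?one b j * C a b k)"
    if "i < n" "j < n" "k < n" for i j k
    using that by (simp add: left right mult.assoc cong: if_cong)
  ultimately show ?thesis
    unfolding gl_orbit_def using assms by blast
qed

definition lie_iso :: "nat \<Rightarrow> 'a::comm_ring_1 sc \<Rightarrow> 'a sc \<Rightarrow> ((nat \<Rightarrow> 'a) \<Rightarrow> nat \<Rightarrow> 'a) \<Rightarrow> bool" where
  "lie_iso n C0 C1 F \<longleftrightarrow> bij_betw F (vecs n) (vecs n)
     \<and> (\<forall>v w. F (\<lambda>k. v k + w k) = (\<lambda>k. F v k + F w k))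
     \<and> (\<forall>c v. F (\<lambda>k. c * v k) = (\<lambda>k. c * F v k))
     \<and> (\<forall>x y. F (br n C0 x y) = br n C1 (F x) (F y))"

definition lin_map :: "nat \<Rightarrow> (nat \<Rightarrow> nat \<Rightarrow> 'a::comm_ring_1) \<Rightarrow> (nat \<Rightarrow> 'a) \<Rightarrow> nat \<Rightarrow> 'a" where
  "lin_map n g v = (\<lambda>k. if k < n then \<Sum>i<n. g k i * v i else 0)"

lemma lin_map_vecs: "lin_map n g v \<in> vecs n"
  by (simp add: lin_map_def vecs_def)

lemma lin_map_inverse:
  assumes gh: "\<forall>i<n. \<forall>j<n. (\<Sum>l<n. g i l * h l j) = (if i = j then 1 else 0)" and "v \<in> vecs n"
  shows "lin_map n g (lin_map n h v) = v"
proof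
  fix k
  show "lin_map n g (lin_map n h v) k = v k"
  proof (cases "k < n")
    case True
    have "lin_map n g (lin_map n h v) k = (\<Sum>i<n. \<Sum>l<n. g k i * h i l * v l)"
      using True by (simp add: lin_map_def sum_distrib_left mult.assoc)
    also have "\<dots> = (\<Sum>l<n. (\<Sum>i<n. g k i * h i l) * v l)"
      by (subst sum.swap) (simp add: sum_distrib_right)
    also have "\<dots> = v k"
      using gh True by (simp add: if_distrib[of "\<lambda>t. t * _"] cong: if_cong)
    finally show ?thesis .
  next
    case False
    then show ?thesis using \<open>v \<in> vecs n\<close> by (simp add: lin_map_def vecs_def)
  qed
qed

lemma bilinear_sum_swap:
  fixes K :: "'b \<Rightarrow> 'b \<Rightarrow> 'b \<Rightarrow> 'a::comm_ring_1"
  shows "(\<Sum>c\<in>A. g c * (\<Sum>i\<in>A. \<Sum>j\<in>A. x i * y j * K i j c)) =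
         (\<Sum>i\<in>A. \<Sum>j\<in>A. x i * y j * (\<Sum>c\<in>A. K i j c * g c))"
proof -
  have "(\<Sum>c\<in>A. g c * (\<Sum>i\<in>A. \<Sum>j\<in>A. x i * y j * K i j c)) =
        (\<Sum>c\<in>A. \<Sum>i\<in>A. \<Sum>j\<in>A. g c * (x i * y j * K i j c))"
    by (simp add: sum_distrib_left)
  also have "\<dots> = (\<Sum>i\<in>A. \<Sum>c\<in>A. \<Sum>j\<in>A. g c * (x i * y j * K i j c))"
    by (rule sum.swap)
  also have "\<dots> = (\<Sum>i\<in>A. \<Sum>j\<in>A. \<Sum>c\<in>A. g c * (x i * y j * K i j c))"
    by (rule sum.cong[OF refl], rule sum.swap)
  also have "\<dots> = (\<Sum>i\<in>A. \<Sum>j\<in>A. x i * y j * (\<Sum>c\<in>A. K i j c * g c))"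
    by (simp add: sum_distrib_left mult_ac)
  finally show ?thesis .
qed

lemma bilinear_sum_change_basis:
  fixes K :: "'b \<Rightarrow> 'b \<Rightarrow> 'a::comm_ring_1"
  shows "(\<Sum>a\<in>A. \<Sum>b\<in>A. (\<Sum>i\<in>A. g a i * x i) * (\<Sum>j\<in>A. g b j * y j) * K a b) =
         (\<Sum>i\<in>A. \<Sum>j\<in>A. x i * y j * (\<Sum>a\<in>A. \<Sum>b\<in>A. g a i * g b j * K a b))"
proof -
  have "(\<Sum>i\<in>A. g a i * x i) * (\<Sum>j\<in>A. g b j * y j) * K a b
        = (\<Sum>i\<in>A. \<Sum>j\<in>A. x i * y j * (g a i * g b j * K a b))" for a b
    unfolding sum_product sum_distrib_right by (simp add: sum_distrib_left mult_ac)
  then have "(\<Sum>a\<in>A. \<Sum>b\<in>A. (\<Sum>i\<in>A. g a i * x i) * (\<Sum>j\<in>A. g b j * y j) * K a b) =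
        (\<Sum>a\<in>A. \<Sum>b\<in>A. \<Sum>i\<in>A. \<Sum>j\<in>A. x i * y j * (g a i * g b j * K a b))"
    by simp
  also have "\<dots> = (\<Sum>a\<in>A. \<Sum>i\<in>A. \<Sum>b\<in>A. \<Sum>j\<in>A. x i * y j * (g a i * g b j * K a b))"
    by (rule sum.cong[OF refl], rule sum.swap)
  also have "\<dots> = (\<Sum>i\<in>A. \<Sum>a\<in>A. \<Sum>b\<in>A. \<Sum>j\<in>A. x i * y j * (g a i * g b j * K a b))"
    by (rule sum.swap)
  also have "\<dots> = (\<Sum>i\<in>A. \<Sum>a\<in>A. \<Sum>j\<in>A. \<Sum>b\<in>A. x i * y j * (g a i * g b j * K a b))"
    by (rule sum.cong[OF refl], rule sum.cong[OF refl], rule sum.swap)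
  also have "\<dots> = (\<Sum>i\<in>A. \<Sum>j\<in>A. \<Sum>a\<in>A. \<Sum>b\<in>A. x i * y j * (g a i * g b j * K a b))"
    by (rule sum.cong[OF refl], rule sum.swap)
  also have "\<dots> = (\<Sum>i\<in>A. \<Sum>j\<in>A. x i * y j * (\<Sum>a\<in>A. \<Sum>b\<in>A. g a i * g b j * K a b))"
    by (simp add: sum_distrib_left)
  finally show ?thesis .
qed

lemma lin_map_br:
  fixes C0 C1 :: "'a::comm_ring_1 sc"
  assumes "in_ambient n C1"
    and eq: "\<forall>i<n. \<forall>j<n. \<forall>k<n. (\<Sum>c<n. C0 i j c * g k c) = (\<Sum>a<n. \<Sum>b<n. g a i * g b j * C1 a b k)"
  shows "lin_map n g (br n C0 x y) = br n C1 (lin_map n g x) (lin_map n g y)"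
proof
  fix k
  show "lin_map n g (br n C0 x y) k = br n C1 (lin_map n g x) (lin_map n g y) k"
  proof (cases "k < n")
    case True
    have "lin_map n g (br n C0 x y) k = (\<Sum>i<n. \<Sum>j<n. x i * y j * (\<Sum>c<n. C0 i j c * g k c))"
      using True bilinear_sum_swap by (simp add: lin_map_def br_def)
    also have "\<dots> = (\<Sum>i<n. \<Sum>j<n. x i * y j * (\<Sum>a<n. \<Sum>b<n. g a i * g b j * C1 a b k))"
      using eq True by simp
    also have "\<dots> = br n C1 (lin_map n g x) (lin_map n g y) k"
      unfolding br_def using bilinear_sum_change_basis[symmetric] by (simp add: lin_map_def)
    finally show ?thesis .
  next
    case False
    with assms(1) show ?thesis by (simp add: lin_map_def br_def in_ambient_def)
  qed
qed

lemma gl_orbit_lie_iso: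
  fixes C0 C1 :: "'a::comm_ring_1 sc"
  assumes "C1 \<in> gl_orbit n C0"
  shows "\<exists>F. lie_iso n C0 C1 F"
proof -
  obtain g where "in_ambient n C1" and "invertible_mat n g" and
    eq: "\<forall>i<n. \<forall>j<n. \<forall>k<n. (\<Sum>c<n. C0 i j c * g k c) = (\<Sum>a<n. \<Sum>b<n. g a i * g b j * C1 a b k)"
    using assms unfolding gl_orbit_def by blast
  then obtain h where
    gh: "\<forall>i<n. \<forall>j<n. (\<Sum>l<n. g i l * h l j) = (if i = j then 1 else 0)" and
    hg: "\<forall>i<n. \<forall>j<n. (\<Sum>l<n. h i l * g l j) = (if i = j then 1 else 0)"
    unfolding invertible_mat_def by blast
  have "bij_betw (lin_map n g) (vecs n) (vecs n)"
    by (rule bij_betw_byWitness[where f' = "lin_map n h"])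
      (use lin_map_inverse[OF gh] lin_map_inverse[OF hg] lin_map_vecs in auto)
  moreover have "lin_map n g (\<lambda>k. v k + w k) = (\<lambda>k. lin_map n g v k + lin_map n g w k)" for v w
    by (simp add: lin_map_def sum.distrib distrib_left fun_eq_iff)
  moreover have "lin_map n g (\<lambda>k. c * v k) = (\<lambda>k. c * lin_map n g v k)" for c v
    by (simp add: lin_map_def sum_distrib_left mult_ac fun_eq_iff)
  ultimately have "lie_iso n C0 C1 (lin_map n g)"
    unfolding lie_iso_def using lin_map_br[OF \<open>in_ambient n C1\<close> eq] by blast
  then show ?thesis by blast
qed

text \<open>Read off from the brackets of F8 with a1 = 0: \<open>m i j\<close> is the coefficient of
  \<open>\<mu>(X\<^sub>i, X\<^sub>j)\<close>, \<open>i < j\<close>, in \<open>\<mu>(x, y)\<close>.\<close>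
definition F8_bracket ::
    "'a::comm_ring_1 \<Rightarrow> 'a \<Rightarrow> 'a \<Rightarrow> 'a \<Rightarrow> 'a \<Rightarrow> 'a \<Rightarrow> (nat \<Rightarrow> 'a) \<Rightarrow> (nat \<Rightarrow> 'a) \<Rightarrow> nat \<Rightarrow> 'a" where
  "F8_bracket b2 b4 b5 b6 b7 b8 x y k =
    (let m = (\<lambda>i j. x i * y j - x j * y i) in
     if k = 2 then m 0 1
     else if k = 3 then m 0 2
     else if k = 4 then m 0 3 + (b2 + 2 * b4) * m 1 2
     else if k = 5 then m 0 4 + (b5 + b6) * m 1 2 + (b2 + 2 * b4) * m 1 3
     else if k = 6 then m 0 5 + b7 * m 1 2 + (b5 + b6) * m 1 3 + (b2 + b4) * m 1 4 + b4 * m 2 3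
     else if k = 7 then m 0 6 + b8 * m 1 2 + b7 * m 1 3 + b5 * m 1 4 + b2 * m 1 5
                        + b6 * m 2 3 + b4 * m 2 4
     else 0)"

lemma F8_nonzero_index:
  assumes "F8 a1 a2 a4 a5 a6 a7 a8 i j k \<noteq> 0"
  shows "i < k \<and> j < k \<and> 2 \<le> k \<and> k < 8"
  using assms unfolding F8_def F8_up_def by (auto split: if_splits)

lemma in_ambient_F8: "in_ambient 8 (F8 a1 a2 a4 a5 a6 a7 a8)"
  unfolding in_ambient_def using F8_nonzero_index by fastforce

lemma sum_lessThan_8: "(\<Sum>s<(8::nat). f s) = f 0 + f 1 + f 2 + f 3 + f 4 + f 5 + f 6 + f 7"
  by (simp add: numeral_eq_Suc add.assoc)

lemma br_F8: "br 8 (F8 0 b2 b4 b5 b6 b7 b8) x y = F8_bracket b2 b4 b5 b6 b7 b8 x y"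
proof
  fix k
  show "br 8 (F8 0 b2 b4 b5 b6 b7 b8) x y k = F8_bracket b2 b4 b5 b6 b7 b8 x y k"
  proof (cases "k < 8")
    case True
    then consider "k = 0" | "k = 1" | "k = 2" | "k = 3" | "k = 4" | "k = 5" | "k = 6" | "k = 7"
      by linarith
    then show ?thesis
      by cases (simp_all add: br_def sum_lessThan_8 F8_def F8_up_def F8_bracket_def Let_def algebra_simps)
  next
    case False
    then show ?thesis
      using F8_nonzero_index[of 0 b2 b4 b5 b6 b7 b8 _ _ k]
      by (fastforce simp: br_def F8_bracket_def)
  qed
qed

lemma F8_bracket_jacobi:
  "F8_bracket b2 b4 b5 b6 b7 b8 (F8_bracket b2 b4 b5 b6 b7 b8 x y) z k
   + F8_bracket b2 b4 b5 b6 b7 b8 (F8_bracket b2 b4 b5 b6 b7 b8 y z) x k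
   + F8_bracket b2 b4 b5 b6 b7 b8 (F8_bracket b2 b4 b5 b6 b7 b8 z x) y k = 0"
proof -
  consider "k = 2" | "k = 3" | "k = 4" | "k = 5" | "k = 6" | "k = 7" | "k \<notin> {2,3,4,5,6,7}"
    by blast
  then show ?thesis
    by cases (simp_all add: F8_bracket_def Let_def algebra_simps)
qed

lemma is_lie_F8: "is_lie 8 (F8 0 b2 b4 b5 b6 b7 b8)"
  by (rule is_lieI_bracket) (simp_all add: in_ambient_F8 F8_def br_F8 F8_bracket_jacobi)

lemma F8_row_0: "1 \<le> j \<Longrightarrow> j \<le> 6 \<Longrightarrow> F8 0 b2 b4 b5 b6 b7 b8 0 j = unit_vec (Suc j)"
  by (auto simp: F8_def F8_up_def unit_vec_def)

lemma F8_in_Fil_var: "F8 0 b2 b4 b5 b6 b7 b8 \<in> Fil_var 8"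
proof -
  have "filiform_br 8 (F8 0 b2 b4 b5 b6 b7 b8)"
    by (rule filiform_brI) (simp_all add: in_ambient_F8 F8_nonzero_index F8_row_0)
  then show ?thesis
    using is_lie_F8 by (simp add: Fil_var_def)
qed

lemma F8_bracket_vecs: "F8_bracket b2 b4 b5 b6 b7 b8 x y \<in> vecs 8"
  by (simp add: vecs_def F8_bracket_def)

section \<open>An isomorphism invariant\<close>

lemma F8_bracket_in_vecs_from:
  assumes "v \<in> vecs_from 8 m"
  shows "F8_bracket b2 b4 b5 b6 b7 b8 x v \<in> vecs_from 8 (Suc m)"
proof -
  have "br 8 (F8 0 b2 b4 b5 b6 b7 b8) x v \<in> vecs_from 8 (Suc m)"
    by (rule br_in_vecs_from_Suc[OF in_ambient_F8 _ assms]) (use F8_nonzero_index in blast)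
  then show ?thesis
    by (simp add: br_F8)
qed

lemma F8_bracket_leading_coeff:
  assumes "v \<in> vecs_from 8 m" and "1 \<le> m" and "m \<le> 6"
  shows "F8_bracket b2 b4 b5 b6 b7 b8 x v (Suc m) = x 0 * v m"
proof -
  have "v i = 0" if "i < m" for i
    using vecs_fromD[OF assms(1) that] .
  moreover have "m = 1 \<or> m = 2 \<or> m = 3 \<or> m = 4 \<or> m = 5 \<or> m = 6"
    using assms(2,3) by auto
  ultimately show ?thesis
    by (elim disjE) (simp_all add: F8_bracket_def)
qed

lemma F8_bracket_power:
  assumes "v \<in> vecs_from 8 m" and "1 \<le> m" and "m + k \<le> 7"
  shows "(F8_bracket b2 b4 b5 b6 b7 b8 x ^^ k) v \<in> vecs_from 8 (m + k)
    \<and> (F8_bracket b2 b4 b5 b6 b7 b8 x ^^ k) v (m + k) = x 0 ^ k * v m"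
  using assms(3)
proof (induction k)
  case (Suc k)
  let ?u = "(F8_bracket b2 b4 b5 b6 b7 b8 x ^^ k) v"
  from Suc have u: "?u \<in> vecs_from 8 (m + k)" and "?u (m + k) = x 0 ^ k * v m"
    by simp_all
  then show ?case
    using F8_bracket_in_vecs_from[OF u] F8_bracket_leading_coeff[OF u] assms(2) Suc.prems
    by (simp add: mult_ac)
qed (use assms(1) in simp)

lemma F8_bracket_unit_vec_0:
  "1 \<le> j \<Longrightarrow> j \<le> 6 \<Longrightarrow> F8_bracket b2 b4 b5 b6 b7 b8 (unit_vec 0) (unit_vec j) = unit_vec (Suc j)"
  using br_unit_vec[of 0 8 j "F8 0 b2 b4 b5 b6 b7 b8"] by (simp add: br_F8 F8_row_0)

lemma F8_bracket_unit_vec_1_2: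
  "F8_bracket b2 b4 b5 b6 b7 b8 (unit_vec 1) (unit_vec 2)
   = (\<lambda>k. (b2 + 2 * b4) * unit_vec 4 k + (b5 + b6) * unit_vec 5 k + b7 * unit_vec 6 k + b8 * unit_vec 7 k)"
  by (simp add: F8_bracket_def unit_vec_def fun_eq_iff)

lemma F8_bracket_unit_vec_1_5:
  "F8_bracket b2 b4 b5 b6 b7 b8 (unit_vec 1) (unit_vec 5) = (\<lambda>k. b2 * unit_vec 7 k)"
  by (simp add: F8_bracket_def unit_vec_def fun_eq_iff)

lemma F8_bracket_unit_vec_2_4:
  "F8_bracket b2 b4 b5 b6 b7 b8 (unit_vec 2) (unit_vec 4) = (\<lambda>k. b4 * unit_vec 7 k)"
  by (simp add: F8_bracket_def unit_vec_def fun_eq_iff)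

lemma F8_bracket_vecs_from_5:
  assumes "y 0 = 0" and "v \<in> vecs_from 8 5"
  shows "F8_bracket b2 b4 b5 b6 b7 b8 y v = (\<lambda>k. b2 * (y 1 * v 5) * unit_vec 7 k)"
  using assms vecs_fromD[OF assms(2)] by (simp add: F8_bracket_def unit_vec_def fun_eq_iff)

lemma F8_bracket_vecs_from_2_4:
  assumes "u \<in> vecs_from 8 2" and "v \<in> vecs_from 8 4"
  shows "F8_bracket b2 b4 b5 b6 b7 b8 u v = (\<lambda>k. b4 * (u 2 * v 4) * unit_vec 7 k)"
  using vecs_fromD[OF assms(1)] vecs_fromD[OF assms(2)]
  by (simp add: F8_bracket_def unit_vec_def fun_eq_iff)

locale F8_iso =
  fixes b2 b4 b5 b6 b7 b8 c2 c4 c5 c6 c7 c8 :: "'a::idom"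
    and F :: "(nat \<Rightarrow> 'a) \<Rightarrow> nat \<Rightarrow> 'a" and x y :: "nat \<Rightarrow> 'a"
  assumes iso: "lie_iso 8 (F8 0 b2 b4 b5 b6 b7 b8) (F8 0 c2 c4 c5 c6 c7 c8) F"
    and F_x: "F x = unit_vec 0" and F_y: "F y = unit_vec 1"
begin

abbreviation B0 where "B0 \<equiv> F8_bracket b2 b4 b5 b6 b7 b8"
abbreviation B1 where "B1 \<equiv> F8_bracket c2 c4 c5 c6 c7 c8"

lemma F_bracket: "F (B0 u v) = B1 (F u) (F v)"
  using iso by (simp add: lie_iso_def br_F8)

lemma F_add: "F (\<lambda>k. v k + w k) = (\<lambda>k. F v k + F w k)"
  and F_scale: "F (\<lambda>k. c * v k) = (\<lambda>k. c * F v k)"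
  using iso by (simp_all add: lie_iso_def)

lemma F_zero: "F (\<lambda>k. 0) = (\<lambda>k. 0)"
  using F_scale[of 0 "\<lambda>k. 0"] by simp

lemma F_inj: "v \<in> vecs 8 \<Longrightarrow> w \<in> vecs 8 \<Longrightarrow> F v = F w \<Longrightarrow> v = w"
  using iso by (auto simp: lie_iso_def dest: bij_betw_imp_inj_on inj_onD)

definition chain :: "nat \<Rightarrow> nat \<Rightarrow> 'a" where
  "chain k = (B0 x ^^ k) (B0 x y)"

lemma F_chain: "k \<le> 5 \<Longrightarrow> F (chain k) = unit_vec (k + 2)"
proof (induction k)
  case 0
  show ?case
    by (simp add: chain_def F_bracket F_x F_y F8_bracket_unit_vec_0 numeral_2_eq_2)
next
  case (Suc k)
  then show ?case
    by (simp add: chain_def F_bracket F_x F8_bracket_unit_vec_0)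
qed

lemma chain_0: "chain 0 \<in> vecs_from 8 2" "chain 0 2 = x 0 * y 1 - x 1 * y 0"
  by (simp_all add: chain_def vecs_from_def F8_bracket_vecs) (simp_all add: F8_bracket_def)

lemma chain_in_vecs_from: "k \<le> 5 \<Longrightarrow> chain k \<in> vecs_from 8 (k + 2)"
  and chain_leading_coeff: "k \<le> 5 \<Longrightarrow> chain k (k + 2) = x 0 ^ k * (x 0 * y 1 - x 1 * y 0)"
  using F8_bracket_power[OF chain_0(1), of k] chain_0(2)
  by (simp_all add: chain_def add.commute)

lemma chain_vecs: "k \<le> 5 \<Longrightarrow> chain k \<in> vecs 8"
  using chain_in_vecs_from vecs_from_vecs by blast

lemma minor_nonzero: "x 0 * y 1 - x 1 * y 0 \<noteq> 0"
proof
  assume "x 0 * y 1 - x 1 * y 0 = 0"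
  then have "chain 5 7 = 0"
    using chain_leading_coeff[of 5] by simp
  moreover have "chain 5 k = 0" if "k \<noteq> 7" for k
  proof (cases "k < 7")
    case True
    then show ?thesis using vecs_fromD[OF chain_in_vecs_from[of 5]] by simp
  next
    case False
    with that have "8 \<le> k" by simp
    then show ?thesis using chain_vecs[of 5] by (simp add: vecs_def)
  qed
  ultimately have "chain 5 = (\<lambda>k. 0)"
    by (intro ext) metis
  then have "unit_vec 7 = (\<lambda>k. 0::'a)"
    using F_chain[of 5] F_zero by simp
  then show False
    by (metis unit_vec_def zero_neq_one)
qed

lemma y_0: "y 0 = 0"
proof -
  \<comment> \<open>\<open>[X\<^sub>1, X\<^sub>2]\<close> lies in the span of \<open>X\<^sub>4, \<dots>, X\<^sub>7\<close>,
    so \<open>[y, chain 0]\<close> has no \<open>X\<^sub>3\<close>-component.\<close>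
  define L where
    "L k = (c2 + 2 * c4) * chain 2 k + (c5 + c6) * chain 3 k + c7 * chain 4 k + c8 * chain 5 k" for k
  have "F L = B1 (unit_vec 1) (unit_vec 2)"
    unfolding L_def F_add F_scale F8_bracket_unit_vec_1_2 by (simp add: F_chain)
  also have "\<dots> = F (B0 y (chain 0))"
    by (simp add: F_bracket F_y F_chain numeral_2_eq_2)
  finally have "F L = F (B0 y (chain 0))" .
  moreover have "L \<in> vecs 8"
    using chain_vecs[of 2] chain_vecs[of 3] chain_vecs[of 4] chain_vecs[of 5]
    by (simp add: L_def vecs_def)
  ultimately have "B0 y (chain 0) = L"
    using F_inj[OF F8_bracket_vecs] by metis
  then have "B0 y (chain 0) 3 = 0"
    using vecs_fromD[OF chain_in_vecs_from[of 2]] vecs_fromD[OF chain_in_vecs_from[of 3]]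
      vecs_fromD[OF chain_in_vecs_from[of 4]] vecs_fromD[OF chain_in_vecs_from[of 5]]
    by (simp add: L_def)
  moreover have "B0 y (chain 0) 3 = y 0 * (x 0 * y 1 - x 1 * y 0)"
    using chain_0 vecs_fromD[OF chain_0(1), of 0] by (simp add: F8_bracket_def)
  ultimately show ?thesis
    using minor_nonzero by simp
qed

definition scale :: 'a where
  "scale = y 1 * chain 3 5 * F (unit_vec 7) 7"

lemma c2_proportional: "c2 = scale * b2"
proof -
  have "F (chain 3) = unit_vec 5"
    using F_chain[of 3] by simp
  then have "(\<lambda>k. c2 * unit_vec 7 k) = F (B0 y (chain 3))"
    by (simp only: F_bracket F_y F8_bracket_unit_vec_1_5)
  also have "\<dots> = (\<lambda>k. b2 * (y 1 * chain 3 5) * F (unit_vec 7) k)"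
    using F8_bracket_vecs_from_5[of y "chain 3"] y_0 chain_in_vecs_from[of 3] by (simp add: F_scale)
  finally have "(\<lambda>k. c2 * unit_vec 7 k) = (\<lambda>k. b2 * (y 1 * chain 3 5) * F (unit_vec 7) k)" .
  from fun_cong[OF this, of 7] show ?thesis
    by (simp add: scale_def unit_vec_def mult_ac)
qed

lemma c4_proportional: "c4 = scale * b4"
proof -
  have "F (chain 0) = unit_vec 2"
    using F_chain[of 0] by (simp add: numeral_2_eq_2)
  moreover have "F (chain 2) = unit_vec 4"
    using F_chain[of 2] by simp
  ultimately have "(\<lambda>k. c4 * unit_vec 7 k) = F (B0 (chain 0) (chain 2))"
    by (simp only: F_bracket F8_bracket_unit_vec_2_4)
  also have "\<dots> = (\<lambda>k. b4 * (chain 0 2 * chain 2 4) * F (unit_vec 7) k)"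
    using F8_bracket_vecs_from_2_4[of "chain 0" "chain 2"] chain_0(1) chain_in_vecs_from[of 2]
    by (simp add: F_scale)
  also have "chain 0 2 * chain 2 4 = y 1 * chain 3 5"
    using chain_0(2) chain_leading_coeff[of 2] chain_leading_coeff[of 3] y_0
    by (simp add: power2_eq_square power3_eq_cube)
  finally have "(\<lambda>k. c4 * unit_vec 7 k) = (\<lambda>k. b4 * (y 1 * chain 3 5) * F (unit_vec 7) k)" .
  from fun_cong[OF this, of 7] show ?thesis
    by (simp add: scale_def unit_vec_def mult_ac)
qed

end

lemma F8_orbit_proportional:
  fixes b2 b4 b5 b6 b7 b8 c2 c4 c5 c6 c7 c8 :: "'a::idom"
  assumes "F8 0 c2 c4 c5 c6 c7 c8 \<in> gl_orbit 8 (F8 0 b2 b4 b5 b6 b7 b8)"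
  shows "\<exists>s. c2 = s * b2 \<and> c4 = s * b4"
proof -
  obtain F where iso: "lie_iso 8 (F8 0 b2 b4 b5 b6 b7 b8) (F8 0 c2 c4 c5 c6 c7 c8) F"
    using gl_orbit_lie_iso[OF assms] by blast
  then have "unit_vec 0 \<in> F ` vecs 8" and "unit_vec 1 \<in> F ` vecs 8"
    by (auto simp: lie_iso_def bij_betw_def vecs_def unit_vec_def)
  then obtain x y where "F x = unit_vec 0" and "F y = unit_vec 1"
    by (metis imageE)
  with iso interpret F8_iso b2 b4 b5 b6 b7 b8 c2 c4 c5 c6 c7 c8 F x y
    by unfold_locales
  show ?thesis
    using c2_proportional c4_proportional by blast
qed

lemma poly_F8:
  "poly (F8 0 p2 p4 p5 p6 p7 p8 i j k) t
   = F8 0 (poly p2 t) (poly p4 t) (poly p5 t) (poly p6 t) (poly p7 t) (poly p8 t) i j k"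
  unfolding F8_def F8_up_def by (simp split: if_split)

lemma direction_off_line:
  fixes a b :: "'a::idom"
  obtains u v where "\<And>t s. t \<noteq> 0 \<Longrightarrow> \<not> (a + t * u = s * a \<and> b + t * v = s * b)"
proof (cases "b = 0")
  case True
  then show ?thesis by (intro that[of 0 1]) simp
next
  case False
  show ?thesis
  proof (rule that[of 1 0])
    fix t s :: 'a
    assume "t \<noteq> 0"
    show "\<not> (a + t * 1 = s * a \<and> b + t * 0 = s * b)"
    proof
      assume eqs: "a + t * 1 = s * a \<and> b + t * 0 = s * b"
      with False have "s = 1"
        by (metis add_0_right mult_cancel_right2 mult_zero_right)
      with eqs \<open>t \<noteq> 0\<close> show False
        by simp
    qed
  qed
qed

lemma not_rigid_F8:
  fixes a2 a4 a5 a6 a7 a8 :: "'a::{idom,ring_char_0}"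
  assumes "Fil_var 8 \<subseteq> S"
  shows "\<not> rigid_in 8 S (F8 0 a2 a4 a5 a6 a7 a8)"
proof -
  obtain u v :: 'a
    where off_line: "\<And>t s. t \<noteq> 0 \<Longrightarrow> \<not> (a2 + t * u = s * a2 \<and> a4 + t * v = s * a4)"
    using direction_off_line[of a2 a4] by blast
  define \<Gamma> where "\<Gamma> t = F8 0 (a2 + t * u) (a4 + t * v) a5 a6 a7 a8" for t
  show ?thesis
    unfolding rigid_in_def
  proof (rule not_zariski_open_in_if_curve[where \<Gamma> = \<Gamma>
        and Q = "F8 0 [:a2, u:] [:a4, v:] [:a5:] [:a6:] [:a7:] [:a8:]"])
    show "\<Gamma> t i j k = poly (F8 0 [:a2, u:] [:a4, v:] [:a5:] [:a6:] [:a7:] [:a8:] i j k) t" for t i j k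
      by (simp add: \<Gamma>_def poly_F8)
    show "\<Gamma> t \<in> S" for t
      unfolding \<Gamma>_def by (rule subsetD[OF assms F8_in_Fil_var])
    show "\<Gamma> 0 \<in> gl_orbit 8 (F8 0 a2 a4 a5 a6 a7 a8)"
      using gl_orbit_refl[OF in_ambient_F8] by (simp add: \<Gamma>_def)
    show "\<Gamma> t \<notin> gl_orbit 8 (F8 0 a2 a4 a5 a6 a7 a8)" if "t \<noteq> 0" for t
    proof
      assume "\<Gamma> t \<in> gl_orbit 8 (F8 0 a2 a4 a5 a6 a7 a8)"
      then obtain s where "a2 + t * u = s * a2" and "a4 + t * v = s * a4"
        unfolding \<Gamma>_def by (metis F8_orbit_proportional)
      with off_line[OF that] show False
        by blast
    qed
  qed
qed

theorem proposition12:
  fixes a2 a4 a5 a6 a7 a8 :: "'a::field_char_0"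
  assumes "alg_closed TYPE('a)"
    and "is_lie 8 (F8 0 a2 a4 a5 a6 a7 a8)"
  shows "\<not> rigid_in 8 (Fil_var 8) (F8 0 a2 a4 a5 a6 a7 a8)
       \<and> \<not> rigid_in 8 (Nil_var 8) (F8 0 a2 a4 a5 a6 a7 a8)
       \<and> \<not> rigid_in 8 (Lie_var 8) (F8 0 a2 a4 a5 a6 a7 a8)"
proof -
  have fil_nil: "Fil_var 8 \<subseteq> (Nil_var 8 :: 'a sc set)"
    unfolding Fil_var_def Nil_var_def nilpotent_br_def filiform_br_def by blast
  have nil_lie: "Nil_var 8 \<subseteq> (Lie_var 8 :: 'a sc set)"
    unfolding Nil_var_def Lie_var_def by blast
  have "\<not> rigid_in 8 (Fil_var 8) (F8 0 a2 a4 a5 a6 a7 a8)"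
    by (rule not_rigid_F8[OF subset_refl])
  moreover have "\<not> rigid_in 8 (Nil_var 8) (F8 0 a2 a4 a5 a6 a7 a8)"
    by (rule not_rigid_F8[OF fil_nil])
  moreover have "\<not> rigid_in 8 (Lie_var 8) (F8 0 a2 a4 a5 a6 a7 a8)"
    by (rule not_rigid_F8[OF order_trans[OF fil_nil nil_lie]])
  ultimately show ?thesis
    by blast
qed

end
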